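(* Let $H$ be an undirected connected planarly embedded graph whose perimeter is a simple polygonal curve, such that all interior vertices have degree at least 6 and all interior faces are triangles. For a boundary vertex $x\in\partial H$ let $\deg(x)\ge 2$ denote its degree. Then $$\sum_{x\in\partial H}\max(4-\deg(x),0)\ge 6.$$ *)

theory Defs
  imports Main
begin

text \<open>Plane graphs are represented combinatorially as rotation systems (combinatorial maps):
  a finite set of darts D (half-edges), a fixed-point-free involution alpha (the two halves
  of an edge), and a permutation sigma (cyclic order of darts around their tail vertex).
  A connected map is planarly embedded (on the sphere) iff V - E + F = 2.\<close>

definition orb :: "('a \<Rightarrow> 'a) \<Rightarrow> 'a \<Rightarrow> 'a set" where
  "orb f x = {(f ^^ n) x | n. True}"

definition face_perm :: "('a \<Rightarrow> 'a) \<Rightarrow> ('a \<Rightarrow> 'a) \<Rightarrow> 'a \<Rightarrow> 'a" where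
  "face_perm \<alpha> \<sigma> = \<sigma> \<circ> \<alpha>"

definition map_vertices :: "'a set \<Rightarrow> ('a \<Rightarrow> 'a) \<Rightarrow> 'a set set" where
  "map_vertices D \<sigma> = orb \<sigma> ` D"

definition map_edges :: "'a set \<Rightarrow> ('a \<Rightarrow> 'a) \<Rightarrow> 'a set set" where
  "map_edges D \<alpha> = orb \<alpha> ` D"

definition map_faces :: "'a set \<Rightarrow> ('a \<Rightarrow> 'a) \<Rightarrow> ('a \<Rightarrow> 'a) \<Rightarrow> 'a set set" where
  "map_faces D \<alpha> \<sigma> = orb (face_perm \<alpha> \<sigma>) ` D"

definition comb_map :: "'a set \<Rightarrow> ('a \<Rightarrow> 'a) \<Rightarrow> ('a \<Rightarrow> 'a) \<Rightarrow> bool" where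
  "comb_map D \<alpha> \<sigma> \<longleftrightarrow> finite D \<and> bij_betw \<alpha> D D \<and> bij_betw \<sigma> D D \<and>
     (\<forall>d\<in>D. \<alpha> (\<alpha> d) = d \<and> \<alpha> d \<noteq> d)"

definition map_connected :: "'a set \<Rightarrow> ('a \<Rightarrow> 'a) \<Rightarrow> ('a \<Rightarrow> 'a) \<Rightarrow> bool" where
  "map_connected D \<alpha> \<sigma> \<longleftrightarrow>
     (\<forall>d\<in>D. \<forall>e\<in>D. (d, e) \<in> ({(x, \<alpha> x) | x. x \<in> D} \<union> {(x, \<sigma> x) | x. x \<in> D})\<^sup>*)"

definition map_simple :: "'a set \<Rightarrow> ('a \<Rightarrow> 'a) \<Rightarrow> ('a \<Rightarrow> 'a) \<Rightarrow> bool" where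
  "map_simple D \<alpha> \<sigma> \<longleftrightarrow>
     (\<forall>d\<in>D. orb \<sigma> (\<alpha> d) \<noteq> orb \<sigma> d) \<and>
     (\<forall>d\<in>D. \<forall>e\<in>D. orb \<sigma> d = orb \<sigma> e \<and> orb \<sigma> (\<alpha> d) = orb \<sigma> (\<alpha> e) \<longrightarrow> d = e)"

definition map_planar :: "'a set \<Rightarrow> ('a \<Rightarrow> 'a) \<Rightarrow> ('a \<Rightarrow> 'a) \<Rightarrow> bool" where
  "map_planar D \<alpha> \<sigma> \<longleftrightarrow>
     int (card (map_vertices D \<sigma>)) - int (card (map_edges D \<alpha>))
       + int (card (map_faces D \<alpha> \<sigma>)) = 2"

definition vdeg :: "'a set \<Rightarrow> nat" where
  "vdeg v = card v"

definition boundary_vertices :: "('a \<Rightarrow> 'a) \<Rightarrow> 'a set \<Rightarrow> 'a set set" where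
  "boundary_vertices \<sigma> Out = orb \<sigma> ` Out"

definition triangulated_disk :: "'a set \<Rightarrow> ('a \<Rightarrow> 'a) \<Rightarrow> ('a \<Rightarrow> 'a) \<Rightarrow> 'a set \<Rightarrow> bool" where
  "triangulated_disk D \<alpha> \<sigma> Out \<longleftrightarrow>
     comb_map D \<alpha> \<sigma> \<and> map_connected D \<alpha> \<sigma> \<and> map_simple D \<alpha> \<sigma> \<and> map_planar D \<alpha> \<sigma> \<and>
     Out \<in> map_faces D \<alpha> \<sigma> \<and> card Out \<ge> 3 \<and>
     (\<forall>d\<in>Out. \<forall>e\<in>Out. orb \<sigma> d = orb \<sigma> e \<longrightarrow> d = e) \<and>
     (\<forall>F\<in>map_faces D \<alpha> \<sigma>. F \<noteq> Out \<longrightarrow> card F = 3) \<and>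
     (\<forall>v\<in>map_vertices D \<sigma>. v \<notin> boundary_vertices \<sigma> Out \<longrightarrow> vdeg v \<ge> 6)"

end

theory Submission
  imports Defs
begin

text \<open>Count the n darts in three ways: by vertices, by edges (n = 2E) and by faces
  (n = b + 3(F - 1), where b is the length of the boundary walk, which also equals the number
  of boundary vertices since the perimeter is simple). Euler's formula V - E + F = 2 then
  becomes 6V = n + 2b + 6. Interior vertices carry at least 6 darts, so
  6V \<le> n - (\<Sum>x\<in>\<partial>H. deg x) + 6b, and together \<Sum>x\<in>\<partial>H. (4 - deg x) \<ge> 6.\<close>

lemma self_in_orb: "d \<in> orb f d"
  unfolding orb_def by (auto intro: exI[of _ 0])

lemma orb_subset:
  assumes "bij_betw f D D" "d \<in> D"
  shows "orb f d \<subseteq> D"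
  using bij_betwE[OF bij_betw_funpow[OF assms(1)]] assms(2) unfolding orb_def by blast

lemma orb_trans:
  assumes "x \<in> orb f y"
  shows "orb f x \<subseteq> orb f y"
proof
  fix z assume "z \<in> orb f x"
  then obtain m where z: "z = (f ^^ m) x" unfolding orb_def by auto
  obtain n where x: "x = (f ^^ n) y" using assms unfolding orb_def by auto
  have "z = (f ^^ (m + n)) y" using z x by (simp add: funpow_add)
  then show "z \<in> orb f y" unfolding orb_def by auto
qed

lemma bij_betw_funpow_periodic:
  assumes "bij_betw f D D" "finite D" "d \<in> D"
  obtains p where "p > 0" "(f ^^ p) d = d"
proof -
  \<comment> \<open>funpow_inj_finite needs global injectivity, so extend f by the identity outside D.\<close>
  define g where "g x = (if x \<in> D then f x else x)" for x
  have "inj g"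
    using assms(1) unfolding g_def inj_def bij_betw_def by (metis image_eqI inj_on_eq_iff)
  have iter: "(g ^^ n) d = (f ^^ n) d" for n
  proof (induction n)
    case (Suc n)
    have "(f ^^ n) d \<in> D" using orb_subset[OF assms(1,3)] unfolding orb_def by blast
    with Suc show ?case by (simp add: g_def)
  qed simp
  have "{y. \<exists>n. y = (g ^^ n) d} \<subseteq> D"
    using orb_subset[OF assms(1,3)] unfolding orb_def iter by blast
  then have "finite {y. \<exists>n. y = (g ^^ n) d}" using assms(2) finite_subset by blast
  then obtain p where "p > 0" "(g ^^ p) d = d" using funpow_inj_finite[OF \<open>inj g\<close>] by blast
  with that show thesis by (simp add: iter)
qed

lemma funpow_periodic_mult:
  assumes "(f ^^ p) d = d"
  shows "(f ^^ (p * k)) d = d"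
proof (induction k)
  case (Suc k)
  then show ?case using assms by (simp add: funpow_add)
qed simp

lemma orb_sym:
  assumes "bij_betw f D D" "finite D" "y \<in> D" "x \<in> orb f y"
  shows "y \<in> orb f x"
proof -
  obtain p where "p > 0" "(f ^^ p) y = y" using bij_betw_funpow_periodic[OF assms(1-3)] .
  obtain n where x: "x = (f ^^ n) y" using assms(4) unfolding orb_def by auto
  have "p * n = (p - 1) * n + n" using \<open>p > 0\<close> by (simp add: diff_mult_distrib)
  then have "(f ^^ ((p - 1) * n)) x = (f ^^ (p * n)) y" by (simp add: x funpow_add)
  also have "\<dots> = y" using funpow_periodic_mult[OF \<open>(f ^^ p) y = y\<close>] .
  finally have "y = (f ^^ ((p - 1) * n)) x" ..
  then show ?thesis unfolding orb_def by blast
qed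

lemma orb_eq_if_mem:
  assumes "bij_betw f D D" "finite D" "y \<in> D" "x \<in> orb f y"
  shows "orb f x = orb f y"
  using orb_trans[OF assms(4)] orb_trans[OF orb_sym[OF assms]] by (rule subset_antisym)

lemma sum_card_orbs:
  assumes "bij_betw f D D" "finite D"
  shows "(\<Sum>Q\<in>orb f ` D. card Q) = card D"
proof -
  have union: "\<Union> (orb f ` D) = D"
    using orb_subset[OF assms(1)] self_in_orb[of _ f] by blast
  have "pairwise disjnt (orb f ` D)"
  proof (rule pairwiseI, clarify)
    fix a b assume ab: "a \<in> D" "b \<in> D" "orb f a \<noteq> orb f b"
    show "disjnt (orb f a) (orb f b)"
    proof (rule ccontr)
      assume "\<not> disjnt (orb f a) (orb f b)"
      then obtain z where za: "z \<in> orb f a" and zb: "z \<in> orb f b"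
        unfolding disjnt_def by blast
      have "orb f a = orb f z" using orb_eq_if_mem[OF assms ab(1) za] by simp
      also have "\<dots> = orb f b" using orb_eq_if_mem[OF assms ab(2) zb] .
      finally show False using ab(3) by contradiction
    qed
  qed
  moreover have "finite Q" if "Q \<in> orb f ` D" for Q
    using that orb_subset[OF assms(1)] assms(2) finite_subset by blast
  ultimately have "card (\<Union> (orb f ` D)) = (\<Sum>Q\<in>orb f ` D. card Q)"
    by (rule card_Union_disjoint)
  with union show ?thesis by simp
qed

lemma orb_involution:
  assumes "f (f d) = d"
  shows "orb f d = {d, f d}"
proof -
  have "(f ^^ n) d = (if even n then d else f d)" for n
    by (induction n) (auto simp: assms)
  then show ?thesis unfolding orb_def by (auto intro: exI[of _ 0] exI[of _ 1])
qed

lemma bij_betw_face_perm: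
  assumes "comb_map D \<alpha> \<sigma>"
  shows "bij_betw (face_perm \<alpha> \<sigma>) D D"
  using assms unfolding comb_map_def face_perm_def by (metis bij_betw_trans)

lemma comb_map_sum_vdeg:
  assumes "comb_map D \<alpha> \<sigma>"
  shows "(\<Sum>v\<in>map_vertices D \<sigma>. vdeg v) = card D"
  using assms sum_card_orbs unfolding comb_map_def map_vertices_def vdeg_def by blast

lemma comb_map_sum_card_faces:
  assumes "comb_map D \<alpha> \<sigma>"
  shows "(\<Sum>F\<in>map_faces D \<alpha> \<sigma>. card F) = card D"
  using assms sum_card_orbs[OF bij_betw_face_perm] unfolding comb_map_def map_faces_def by blast

lemma comb_map_card_darts:
  assumes "comb_map D \<alpha> \<sigma>"
  shows "card D = 2 * card (map_edges D \<alpha>)"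
proof -
  have bij: "bij_betw \<alpha> D D" and fin: "finite D" and inv: "\<forall>d\<in>D. \<alpha> (\<alpha> d) = d \<and> \<alpha> d \<noteq> d"
    using assms unfolding comb_map_def by blast+
  have "card e = 2" if e: "e \<in> map_edges D \<alpha>" for e
  proof -
    obtain d where "d \<in> D" "e = orb \<alpha> d" using e unfolding map_edges_def by blast
    with inv have "e = {d, \<alpha> d}" "\<alpha> d \<noteq> d" using orb_involution[of \<alpha> d] by auto
    then show ?thesis by simp
  qed
  then have "(\<Sum>e\<in>map_edges D \<alpha>. card e) = 2 * card (map_edges D \<alpha>)" by simp
  then show ?thesis using sum_card_orbs[OF bij fin] unfolding map_edges_def by simp
qed

lemma comb_map_card_darts_faces:
  assumes "comb_map D \<alpha> \<sigma>" "Out \<in> map_faces D \<alpha> \<sigma>"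
    and "\<forall>F\<in>map_faces D \<alpha> \<sigma>. F \<noteq> Out \<longrightarrow> card F = k"
  shows "card D + k = card Out + k * card (map_faces D \<alpha> \<sigma>)"
proof -
  let ?F = "map_faces D \<alpha> \<sigma>"
  have fin: "finite ?F" using assms(1) unfolding comb_map_def map_faces_def by simp
  have "card D = card Out + (\<Sum>F\<in>?F - {Out}. card F)"
    using comb_map_sum_card_faces[OF assms(1)] sum.remove[OF fin assms(2), of card] by simp
  also have "(\<Sum>F\<in>?F - {Out}. card F) = k * (card ?F - 1)"
    using assms(2,3) fin by (simp add: card_Diff_singleton)
  finally have "card D = card Out + k * (card ?F - 1)" .
  moreover have "card ?F > 0" using assms(2) fin card_gt_0_iff by blast
  ultimately show ?thesis by (cases "card ?F") (simp_all add: algebra_simps)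
qed

lemma boundary_vertices_subset:
  assumes "comb_map D \<alpha> \<sigma>" "Out \<in> map_faces D \<alpha> \<sigma>"
  shows "boundary_vertices \<sigma> Out \<subseteq> map_vertices D \<sigma>"
proof -
  have "Out \<subseteq> D"
    using assms orb_subset[OF bij_betw_face_perm[OF assms(1)]] unfolding map_faces_def by blast
  then show ?thesis unfolding boundary_vertices_def map_vertices_def by (rule image_mono)
qed

lemma comb_map_sum_vdeg_lower_bound:
  assumes "comb_map D \<alpha> \<sigma>" and BV: "B \<subseteq> map_vertices D \<sigma>"
    and "\<forall>v\<in>map_vertices D \<sigma> - B. vdeg v \<ge> k"
  shows "(\<Sum>x\<in>B. vdeg x) + k * card (map_vertices D \<sigma>) \<le> card D + k * card B"
proof -
  let ?V = "map_vertices D \<sigma>"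
  have fin: "finite ?V" using assms(1) unfolding comb_map_def map_vertices_def by simp
  have "k * card (?V - B) \<le> (\<Sum>v\<in>?V - B. vdeg v)"
    using sum_mono[of "?V - B" "\<lambda>_. k" vdeg] assms(3) by (simp add: mult.commute)
  moreover have "(\<Sum>x\<in>B. vdeg x) + (\<Sum>v\<in>?V - B. vdeg v) = card D"
    using comb_map_sum_vdeg[OF assms(1)] sum.subset_diff[OF BV fin, of vdeg] by simp
  moreover have "card ?V = card (?V - B) + card B"
    using BV fin by (metis card_Diff_subset card_mono finite_subset le_add_diff_inverse2)
  then have "k * card ?V = k * card (?V - B) + k * card B" by (simp add: algebra_simps)
  ultimately show ?thesis by linarith
qed

lemma triangulated_disk_card_boundary:
  assumes "triangulated_disk D \<alpha> \<sigma> Out"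
  shows "card (boundary_vertices \<sigma> Out) = card Out"
proof -
  have "inj_on (orb \<sigma>) Out"
    using assms unfolding triangulated_disk_def inj_on_def by blast
  then show ?thesis unfolding boundary_vertices_def by (rule card_image)
qed

theorem lemma8p1:
  fixes D :: "'a set" and \<alpha> \<sigma> :: "'a \<Rightarrow> 'a" and Out :: "'a set"
  assumes "triangulated_disk D \<alpha> \<sigma> Out"
  shows "(\<Sum>x\<in>boundary_vertices \<sigma> Out. max (4 - int (vdeg x)) 0) \<ge> 6"
proof -
  let ?B = "boundary_vertices \<sigma> Out"
  have map: "comb_map D \<alpha> \<sigma>" and planar: "map_planar D \<alpha> \<sigma>"
    and Out: "Out \<in> map_faces D \<alpha> \<sigma>"
    and triangles: "\<forall>F\<in>map_faces D \<alpha> \<sigma>. F \<noteq> Out \<longrightarrow> card F = 3"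
    and interior: "\<forall>v\<in>map_vertices D \<sigma> - ?B. vdeg v \<ge> 6"
    using assms unfolding triangulated_disk_def by blast+
  have euler: "int (card (map_vertices D \<sigma>)) - int (card (map_edges D \<alpha>))
      + int (card (map_faces D \<alpha> \<sigma>)) = 2"
    using planar unfolding map_planar_def .
  note counts = comb_map_card_darts[OF map] comb_map_card_darts_faces[OF map Out triangles]
    comb_map_sum_vdeg_lower_bound[OF map boundary_vertices_subset[OF map Out] interior]
    triangulated_disk_card_boundary[OF assms]
  have "6 \<le> 4 * int (card ?B) - int (\<Sum>x\<in>?B. vdeg x)"
    using euler counts by linarith
  also have "\<dots> = (\<Sum>x\<in>?B. 4 - int (vdeg x))"
    by (simp add: sum_subtractf)
  also have "\<dots> \<le> (\<Sum>x\<in>?B. max (4 - int (vdeg x)) 0)"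
    by (rule sum_mono) simp
  finally show ?thesis .
qed

end
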